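(* Assume the setting and the CRAIG recurrence described in the context, and let $k\ge 1$ be an index for which $u^{(k)},p^{(k)}$ are defined. Then $p^{(k)}$ coincides with the $k$-th iterate of the conjugate gradient method, started from the zero initial guess and preconditioned with $N$, applied to the Schur-complement equation $Sp=-b$, where $S=A^TM^{-1}A+C$. That is, $p^{(k)}$ is the unique vector $p\in\mathcal{K}_k:=\operatorname{span}\{N^{-1}b,(N^{-1}S)N^{-1}b,\dots,(N^{-1}S)^{k-1}N^{-1}b\}$ such that $(-b-Sp)^Tx=0$ for all $x\in\mathcal{K}_k$ (equivalently, $p^{(k)}$ minimizes $\|p_*-p\|_S=((p_*-p)^TS(p_*-p))^{1/2}$ over $p\in\mathcal{K}_k$, where $p_*$ solves $Sp_*=-b$). Moreover, $u^{(k)}=-M^{-1}Ap^{(k)}$.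
   Context: Setting: $M\in\mathbb{R}^{m\times m}$ is symmetric positive definite, $A\in\mathbb{R}^{m\times n}$ ($n\le m$) has full column rank, $C\in\mathbb{R}^{n\times n}$ is symmetric positive semidefinite, $b\in\mathbb{R}^n$ is nonzero, and $N\in\mathbb{R}^{n\times n}$ is symmetric positive definite (the preconditioner). For a symmetric positive definite $G$ write $\|x\|_G=(x^TGx)^{1/2}$. The generalized saddle point system is $Mu+Ap=0$, $A^Tu-Cp=b$, with unique solution $(u_*,p_* )$; $S=A^TM^{-1}A+C$. CRAIG recurrence (exact arithmetic): Initialization: $\beta_1=\|b\|_{N^{-1}}$, $q_1=N^{-1}b/\beta_1$, $r_1=q_1$, $w_1=M^{-1}Aq_1$, $s_1=Cr_1$, $\alpha_1=(w_1^TMw_1+r_1^Ts_1)^{1/2}$, $v_1=w_1/\alpha_1$, $t_1=s_1/\alpha_1$, $\zeta_1=\beta_1/\alpha_1$, $u^{(1)}=\zeta_1v_1$, $p^{(1)}=-(\zeta_1/\alpha_1)r_1$. For $k=1,2,\dots$: $g_k=N^{-1}(A^Tv_k+t_k)-\alpha_kq_k$, $\beta_{k+1}=\|g_k\|_N$; if $\beta_{k+1}=0$ the recurrence stops; otherwise $q_{k+1}=g_k/\beta_{k+1}$, $w_{k+1}=M^{-1}Aq_{k+1}-\beta_{k+1}v_k$, $r_{k+1}=q_{k+1}-(\beta_{k+1}/\alpha_k)r_k$, $s_{k+1}=Cr_{k+1}$, $\alpha_{k+1}=(w_{k+1}^TMw_{k+1}+r_{k+1}^Ts_{k+1})^{1/2}$,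 $v_{k+1}=w_{k+1}/\alpha_{k+1}$, $t_{k+1}=s_{k+1}/\alpha_{k+1}$, $\zeta_{k+1}=-(\beta_{k+1}/\alpha_{k+1})\zeta_k$, $u^{(k+1)}=u^{(k)}+\zeta_{k+1}v_{k+1}$, $p^{(k+1)}=p^{(k)}-(\zeta_{k+1}/\alpha_{k+1})r_{k+1}$. *)

theory Defs
  imports "HOL-Analysis.Analysis"
begin

definition Gnorm :: "real^'a^'a \<Rightarrow> real^'a \<Rightarrow> real" where
  "Gnorm G x = sqrt (x \<bullet> (G *v x))"

definition sym_pos_def_mat :: "real^'a^'a \<Rightarrow> bool" where
  "sym_pos_def_mat G \<longleftrightarrow> transpose G = G \<and> (\<forall>x. x \<noteq> 0 \<longrightarrow> x \<bullet> (G *v x) > 0)"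

definition sym_pos_semidef_mat :: "real^'a^'a \<Rightarrow> bool" where
  "sym_pos_semidef_mat G \<longleftrightarrow> transpose G = G \<and> (\<forall>x. x \<bullet> (G *v x) \<ge> 0)"

record ('m,'n) craig_state =
  cq :: "real^'n"
  cr :: "real^'n"
  cv :: "real^'m"
  ct :: "real^'n"
  calpha :: real
  czeta :: real
  cu :: "real^'m"
  cp :: "real^'n"

definition craig_init ::
  "real^'m^'m \<Rightarrow> real^'n^'m \<Rightarrow> real^'n^'n \<Rightarrow> real^'n^'n \<Rightarrow> real^'n \<Rightarrow> ('m,'n) craig_state" where
  "craig_init M A C N b =
    (let beta1 = Gnorm (matrix_inv N) b;
         q1 = (1 / beta1) *\<^sub>R (matrix_inv N *v b);
         r1 = q1;
         w1 = matrix_inv M *v (A *v q1);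
         s1 = C *v r1;
         alpha1 = sqrt (w1 \<bullet> (M *v w1) + r1 \<bullet> s1);
         v1 = (1 / alpha1) *\<^sub>R w1;
         t1 = (1 / alpha1) *\<^sub>R s1;
         zeta1 = beta1 / alpha1
     in \<lparr> cq = q1, cr = r1, cv = v1, ct = t1, calpha = alpha1, czeta = zeta1,
          cu = zeta1 *\<^sub>R v1, cp = - ((zeta1 / alpha1) *\<^sub>R r1) \<rparr>)"

text \<open>g_k and beta_{k+1} computed from the state at index k.\<close>
definition craig_g ::
  "real^'n^'m \<Rightarrow> real^'n^'n \<Rightarrow> ('m,'n) craig_state \<Rightarrow> real^'n" where
  "craig_g A N st = matrix_inv N *v (transpose A *v cv st + ct st) - calpha st *\<^sub>R cq st"

definition craig_beta_next ::
  "real^'n^'m \<Rightarrow> real^'n^'n \<Rightarrow> ('m,'n) craig_state \<Rightarrow> real" where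
  "craig_beta_next A N st = Gnorm N (craig_g A N st)"

definition craig_step ::
  "real^'m^'m \<Rightarrow> real^'n^'m \<Rightarrow> real^'n^'n \<Rightarrow> real^'n^'n \<Rightarrow> ('m,'n) craig_state \<Rightarrow> ('m,'n) craig_state" where
  "craig_step M A C N st =
    (let beta = craig_beta_next A N st;
         q' = (1 / beta) *\<^sub>R craig_g A N st;
         w' = matrix_inv M *v (A *v q') - beta *\<^sub>R cv st;
         r' = q' - (beta / calpha st) *\<^sub>R cr st;
         s' = C *v r';
         alpha' = sqrt (w' \<bullet> (M *v w') + r' \<bullet> s');
         v' = (1 / alpha') *\<^sub>R w';
         t' = (1 / alpha') *\<^sub>R s';
         zeta' = - (beta / alpha') * czeta st
     in \<lparr> cq = q', cr = r', cv = v', ct = t', calpha = alpha', czeta = zeta',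
          cu = cu st + zeta' *\<^sub>R v', cp = cp st - (zeta' / alpha') *\<^sub>R r' \<rparr>)"

text \<open>craig M A C N b i is the state with paper index k = i + 1.\<close>
fun craig ::
  "real^'m^'m \<Rightarrow> real^'n^'m \<Rightarrow> real^'n^'n \<Rightarrow> real^'n^'n \<Rightarrow> real^'n \<Rightarrow> nat \<Rightarrow> ('m,'n) craig_state" where
  "craig M A C N b 0 = craig_init M A C N b"
| "craig M A C N b (Suc i) = craig_step M A C N (craig M A C N b i)"

definition craig_u where "craig_u M A C N b k = cu (craig M A C N b (k - 1))"
definition craig_p where "craig_p M A C N b k = cp (craig M A C N b (k - 1))"

text \<open>u^(k), p^(k) are defined iff beta_2, ..., beta_k are all nonzero.\<close>
definition craig_defined where
  "craig_defined M A C N b k \<longleftrightarrow> 1 \<le> k \<and>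
     (\<forall>i. i + 1 < k \<longrightarrow> craig_beta_next A N (craig M A C N b i) \<noteq> 0)"

definition schur :: "real^'m^'m \<Rightarrow> real^'n^'m \<Rightarrow> real^'n^'n \<Rightarrow> real^'n^'n" where
  "schur M A C = transpose A ** matrix_inv M ** A + C"

definition krylov :: "real^'n^'n \<Rightarrow> real^'n^'n \<Rightarrow> real^'n \<Rightarrow> nat \<Rightarrow> (real^'n) set" where
  "krylov S N b k = span {((\<lambda>x. matrix_inv N *v (S *v x)) ^^ j) (matrix_inv N *v b) | j. j < k}"

end

theory Submission
  imports Defs
begin

(* With w_k = M^-1 A r_k one has alpha_k^2 = r_k' S r_k and, for the N-self-adjoint operator
   L = N^-1 S, the Lanczos relation L r_k = alpha_k (beta_(k+1) q_(k+1) + alpha_k q_k), while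
   q_(k+1) = r_(k+1) + (beta_(k+1) / alpha_k) r_k. An induction in the style of conjugate gradients
   shows that the q_k are N-orthonormal, the r_k are S-conjugate and g_k is N-orthogonal to
   q_1, ..., q_k; the Lanczos relation then puts K_k into the span of q_1, ..., q_k. Since
   N^-1 (-b - S p_k) = zeta_k g_k, the residual is orthogonal to K_k, and this Galerkin condition
   determines p_k because S is positive definite. *)

lemma inner_transpose_mult_vec: "x \<bullet> (transpose G *v y) = (G *v x) \<bullet> (y::real^'n)"
  by (metis dot_lmul_matrix inner_commute transpose_matrix_vector)

lemma sym_pos_def_mat_inner_commute:
  "sym_pos_def_mat G \<Longrightarrow> x \<bullet> (G *v y) = (G *v x) \<bullet> y"
  unfolding sym_pos_def_mat_def by (metis inner_transpose_mult_vec)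

lemma sym_pos_def_mat_invertible:
  fixes G :: "real^'n^'n"
  assumes "sym_pos_def_mat G"
  shows "invertible G"
proof -
  have "G *v x = 0 \<Longrightarrow> x = 0" for x
    using assms unfolding sym_pos_def_mat_def by force
  then show ?thesis
    by (simp add: invertible_left_inverse matrix_left_invertible_ker)
qed

lemma invertible_matrix_inv:
  fixes G :: "real^'n^'n"
  assumes "invertible G"
  shows "G ** matrix_inv G = mat 1" "matrix_inv G ** G = mat 1"
proof -
  have "\<exists>G'. G ** G' = mat 1 \<and> G' ** G = mat 1"
    using assms by (simp add: invertible_def)
  then have "G ** matrix_inv G = mat 1 \<and> matrix_inv G ** G = mat 1"
    unfolding matrix_inv_def by (rule someI_ex)
  then show "G ** matrix_inv G = mat 1" "matrix_inv G ** G = mat 1" by simp_all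
qed

lemma matrix_inv_mult_vec_cancel:
  fixes G :: "real^'n^'n"
  assumes "invertible G"
  shows "G *v (matrix_inv G *v x) = x" "matrix_inv G *v (G *v x) = x"
  using invertible_matrix_inv[OF assms] by (simp_all add: matrix_vector_mul_assoc)

lemma sym_pos_def_mat_matrix_inv:
  fixes G :: "real^'n^'n"
  assumes G: "sym_pos_def_mat G"
  shows "sym_pos_def_mat (matrix_inv G)"
proof -
  note G_inv = invertible_matrix_inv[OF sym_pos_def_mat_invertible[OF G]]
  note cancel = matrix_inv_mult_vec_cancel[OF sym_pos_def_mat_invertible[OF G]]
  have G_sym: "transpose G = G" using G by (simp add: sym_pos_def_mat_def)
  have "transpose (matrix_inv G) ** G = mat 1"
    using arg_cong[OF G_inv(1), of transpose] by (simp add: matrix_transpose_mul G_sym)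
  then have "transpose (matrix_inv G) = matrix_inv G"
    by (metis G_inv(1) matrix_mul_assoc matrix_mul_lid matrix_mul_rid)
  moreover have "x \<bullet> (matrix_inv G *v x) > 0" if "x \<noteq> 0" for x
  proof -
    have "matrix_inv G *v x \<noteq> 0" using that cancel(1)[of x] by auto
    then have "(matrix_inv G *v x) \<bullet> (G *v (matrix_inv G *v x)) > 0"
      using G unfolding sym_pos_def_mat_def by blast
    then show ?thesis by (simp add: cancel inner_commute)
  qed
  ultimately show ?thesis unfolding sym_pos_def_mat_def by blast
qed

lemma matrix_vector_mult_neg: "(G::real^'a^'b) *v (- x) = - (G *v x)"
  by (metis diff_0 matrix_vector_mult_diff_distrib matrix_vector_mult_0_right)

lemmas matrix_vector_mult_linear_simps =
  matrix_vector_right_distrib matrix_vector_mult_diff_distrib matrix_vector_mult_scaleR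
  matrix_vector_mult_neg

lemmas inner_linear_simps = inner_add_left inner_add_right inner_diff_left inner_diff_right

lemma transpose_add: "transpose (G + H) = transpose G + transpose (H::real^'n^'m)"
  by (simp add: transpose_def vec_eq_iff)

lemma schur_mult_vec:
  "schur M A C *v x = transpose A *v (matrix_inv M *v (A *v x)) + C *v x"
  unfolding schur_def
  by (simp add: matrix_vector_mult_add_rdistrib matrix_vector_mul_assoc matrix_mul_assoc)

lemma schur_inner:
  fixes M :: "real^'m^'m" and A :: "real^'n^'m"
  shows "x \<bullet> (schur M A C *v x) = (A *v x) \<bullet> (matrix_inv M *v (A *v x)) + x \<bullet> (C *v x)"
  by (simp add: schur_mult_vec inner_add_right inner_transpose_mult_vec del: transpose_matrix_vector)

lemma sym_pos_def_mat_schur: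
  fixes M :: "real^'m^'m" and A :: "real^'n^'m"
  assumes M: "sym_pos_def_mat M" and C: "sym_pos_semidef_mat C" and A: "inj ((*v) A)"
  shows "sym_pos_def_mat (schur M A C)"
  unfolding sym_pos_def_mat_def
proof
  have "transpose (matrix_inv M) = matrix_inv M" "transpose C = C"
    using sym_pos_def_mat_matrix_inv[OF M] C
    by (simp_all add: sym_pos_def_mat_def sym_pos_semidef_mat_def)
  then show "transpose (schur M A C) = schur M A C"
    by (simp add: schur_def transpose_add matrix_transpose_mul matrix_mul_assoc)
  show "\<forall>x. x \<noteq> 0 \<longrightarrow> 0 < x \<bullet> (schur M A C *v x)"
  proof (intro allI impI)
    fix x :: "real^'n"
    assume "x \<noteq> 0"
    then have "A *v x \<noteq> 0" using A by (metis injD matrix_vector_mult_0_right)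
    then have "0 < (A *v x) \<bullet> (matrix_inv M *v (A *v x))"
      using sym_pos_def_mat_matrix_inv[OF M] by (simp add: sym_pos_def_mat_def)
    moreover have "0 \<le> x \<bullet> (C *v x)" using C by (simp add: sym_pos_semidef_mat_def)
    ultimately show "0 < x \<bullet> (schur M A C *v x)" by (simp add: schur_inner)
  qed
qed

lemma krylov_mono: "k \<le> k' \<Longrightarrow> krylov S N b k \<subseteq> krylov S N b k'"
  unfolding krylov_def by (rule span_mono) auto

lemma krylov_power_mem:
  "j < k \<Longrightarrow> ((\<lambda>x. matrix_inv N *v (S *v x)) ^^ j) (matrix_inv N *v b) \<in> krylov S N b k"
  unfolding krylov_def by (rule span_base) blast

lemma krylov_step:
  assumes "x \<in> krylov S N b k"
  shows "matrix_inv N *v (S *v x) \<in> krylov S N b (Suc k)"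
proof -
  let ?L = "\<lambda>x. matrix_inv N *v (S *v x)"
  let ?G = "\<lambda>k. {(?L ^^ j) (matrix_inv N *v b) | j. j < k}"
  have "linear ?L"
    by (simp add: matrix_vector_mul_assoc)
  then have "?L ` span (?G k) = span (?L ` ?G k)"
    by (simp add: span_linear_image)
  also have "\<dots> \<subseteq> span (?G (Suc k))"
    by (rule span_mono) force
  finally show ?thesis
    using assms unfolding krylov_def by blast
qed

lemma krylov_subset_subspace:
  assumes "subspace V"
    and "\<And>j. j < k \<Longrightarrow> ((\<lambda>x. matrix_inv N *v (S *v x)) ^^ j) (matrix_inv N *v b) \<in> V"
  shows "krylov S N b k \<subseteq> V"
  unfolding krylov_def by (rule span_minimal) (use assms in auto)

lemma galerkin_solution_unique:
  fixes S :: "real^'n^'n"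
  assumes S_pos: "\<And>x. x \<noteq> 0 \<Longrightarrow> 0 < x \<bullet> (S *v x)"
    and V: "subspace V" and "p \<in> V" "p' \<in> V"
    and "\<forall>x\<in>V. (c - S *v p) \<bullet> x = 0" "\<forall>x\<in>V. (c - S *v p') \<bullet> x = 0"
  shows "p = p'"
proof (rule ccontr)
  assume "p \<noteq> p'"
  have "p - p' \<in> V" using assms by (simp add: subspace_diff)
  then have "(c - S *v p') \<bullet> (p - p') - (c - S *v p) \<bullet> (p - p') = 0"
    using assms by simp
  then have "(p - p') \<bullet> (S *v (p - p')) = 0"
    by (simp add: matrix_vector_mult_linear_simps inner_linear_simps inner_commute)
  with S_pos[of "p - p'"] \<open>p \<noteq> p'\<close> show False by simp
qed

locale craig_setting =
  fixes M :: "real^'m^'m" and A :: "real^'n^'m" and C :: "real^'n^'n"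
    and N :: "real^'n^'n" and b :: "real^'n"
  assumes M_spd: "sym_pos_def_mat M" and A_inj: "inj ((*v) A)"
    and C_spsd: "sym_pos_semidef_mat C" and N_spd: "sym_pos_def_mat N"
    and b_nonzero: "b \<noteq> 0"
begin

abbreviation "S \<equiv> schur M A C"
abbreviation L where "L x \<equiv> matrix_inv N *v (S *v x)"
abbreviation "K \<equiv> krylov S N b"

(* Indices are shifted by one against the recurrence as written: q i, r i, \<alpha> i, ... are
   q_(i+1), r_(i+1), \<alpha>_(i+1), ..., and \<beta> i = \<parallel>g i\<parallel>_N is \<beta>_(i+2). *)
abbreviation "\<beta>\<^sub>1 \<equiv> Gnorm (matrix_inv N) b"
abbreviation "q i \<equiv> cq (craig M A C N b i)"
abbreviation "r i \<equiv> cr (craig M A C N b i)"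
abbreviation "v i \<equiv> cv (craig M A C N b i)"
abbreviation "t i \<equiv> ct (craig M A C N b i)"
abbreviation "\<alpha> i \<equiv> calpha (craig M A C N b i)"
abbreviation "\<zeta> i \<equiv> czeta (craig M A C N b i)"
abbreviation "u i \<equiv> cu (craig M A C N b i)"
abbreviation "p i \<equiv> cp (craig M A C N b i)"
abbreviation "g i \<equiv> craig_g A N (craig M A C N b i)"
abbreviation "\<beta> i \<equiv> craig_beta_next A N (craig M A C N b i)"

lemma craig_0:
  "q 0 = (1 / \<beta>\<^sub>1) *\<^sub>R (matrix_inv N *v b)"
  "r 0 = q 0"
  "\<alpha> 0 = sqrt ((matrix_inv M *v (A *v q 0)) \<bullet> (M *v (matrix_inv M *v (A *v q 0))) + r 0 \<bullet> (C *v r 0))"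
  "v 0 = (1 / \<alpha> 0) *\<^sub>R (matrix_inv M *v (A *v q 0))"
  "t 0 = (1 / \<alpha> 0) *\<^sub>R (C *v r 0)"
  "\<zeta> 0 = \<beta>\<^sub>1 / \<alpha> 0"
  "u 0 = \<zeta> 0 *\<^sub>R v 0"
  "p 0 = - ((\<zeta> 0 / \<alpha> 0) *\<^sub>R r 0)"
  by (simp_all add: craig_init_def Let_def)

lemma craig_Suc:
  "q (Suc i) = (1 / \<beta> i) *\<^sub>R g i"
  "r (Suc i) = q (Suc i) - (\<beta> i / \<alpha> i) *\<^sub>R r i"
  "\<alpha> (Suc i) = sqrt ((matrix_inv M *v (A *v q (Suc i)) - \<beta> i *\<^sub>R v i)
      \<bullet> (M *v (matrix_inv M *v (A *v q (Suc i)) - \<beta> i *\<^sub>R v i)) + r (Suc i) \<bullet> (C *v r (Suc i)))"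
  "v (Suc i) = (1 / \<alpha> (Suc i)) *\<^sub>R (matrix_inv M *v (A *v q (Suc i)) - \<beta> i *\<^sub>R v i)"
  "t (Suc i) = (1 / \<alpha> (Suc i)) *\<^sub>R (C *v r (Suc i))"
  "\<zeta> (Suc i) = - (\<beta> i / \<alpha> (Suc i)) * \<zeta> i"
  "u (Suc i) = u i + \<zeta> (Suc i) *\<^sub>R v (Suc i)"
  "p (Suc i) = p i - (\<zeta> (Suc i) / \<alpha> (Suc i)) *\<^sub>R r (Suc i)"
  by (simp_all add: craig_step_def Let_def del: transpose_matrix_vector)

declare craig.simps [simp del]

lemma q_Suc_eq: "q (Suc i) = r (Suc i) + (\<beta> i / \<alpha> i) *\<^sub>R r i"
  by (simp add: craig_Suc(2))

lemma M_cancel: "M *v (matrix_inv M *v x) = x"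
  using matrix_inv_mult_vec_cancel[OF sym_pos_def_mat_invertible[OF M_spd]] by simp

lemma N_cancel: "N *v (matrix_inv N *v x) = x" "matrix_inv N *v (N *v x) = x"
  using matrix_inv_mult_vec_cancel[OF sym_pos_def_mat_invertible[OF N_spd]] by simp_all

lemma S_spd: "sym_pos_def_mat S"
  using sym_pos_def_mat_schur[OF M_spd C_spsd A_inj] .

lemma N_inner_commute: "x \<bullet> (N *v y) = y \<bullet> (N *v x)"
  using sym_pos_def_mat_inner_commute[OF N_spd] by (metis inner_commute)

lemma N_inner_sym: "(N *v x) \<bullet> y = x \<bullet> (N *v y)"
  using sym_pos_def_mat_inner_commute[OF N_spd] by simp

lemma S_inner_commute: "x \<bullet> (S *v y) = y \<bullet> (S *v x)"
  using sym_pos_def_mat_inner_commute[OF S_spd] by (metis inner_commute)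

lemma L_self_adjoint: "L x \<bullet> (N *v y) = x \<bullet> (S *v y)"
  by (metis N_cancel(1) N_inner_commute S_inner_commute)

lemma linear_L: "linear L"
  by (simp add: matrix_vector_mul_assoc)

lemma craig_v: "v i = (1 / \<alpha> i) *\<^sub>R (matrix_inv M *v (A *v r i))"
proof (induction i)
  case 0
  then show ?case by (simp add: craig_0)
next
  case (Suc i)
  then show ?case
    by (simp add: craig_Suc(2,4) matrix_vector_mult_linear_simps)
qed

lemma craig_w_Suc:
  "matrix_inv M *v (A *v q (Suc i)) - \<beta> i *\<^sub>R v i = matrix_inv M *v (A *v r (Suc i))"
  by (simp add: craig_v craig_Suc(2) matrix_vector_mult_linear_simps)

lemma craig_t: "t i = (1 / \<alpha> i) *\<^sub>R (C *v r i)"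
  by (cases i) (simp_all add: craig_0 craig_Suc)

lemma craig_alpha: "\<alpha> i = sqrt (r i \<bullet> (S *v r i))"
proof -
  have energy: "(matrix_inv M *v (A *v x)) \<bullet> (M *v (matrix_inv M *v (A *v x))) + x \<bullet> (C *v x)
      = x \<bullet> (S *v x)" for x
    by (simp add: M_cancel schur_inner inner_commute)
  show ?thesis
  proof (cases i)
    case 0
    then show ?thesis using craig_0(3) by (simp only: craig_0(2)[symmetric] energy)
  next
    case (Suc j)
    then show ?thesis by (simp add: craig_Suc(3) craig_w_Suc energy)
  qed
qed

lemma alpha_pos_iff: "0 < \<alpha> i \<longleftrightarrow> r i \<noteq> 0"
  using S_spd by (force simp: craig_alpha sym_pos_def_mat_def)

lemma craig_g_eq: "g i = (1 / \<alpha> i) *\<^sub>R L (r i) - \<alpha> i *\<^sub>R q i"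
  by (simp add: craig_g_def craig_v craig_t schur_mult_vec matrix_vector_mult_linear_simps
      scaleR_right_distrib)

(* Also for \<beta> i = 0: then g i = 0, while q (Suc i) = 0 by the junk value 1 / 0 = 0. *)
lemma craig_g_beta: "g i = \<beta> i *\<^sub>R q (Suc i)"
proof (cases "\<beta> i = 0")
  case True
  then have "g i \<bullet> (N *v g i) = 0"
    by (simp add: craig_beta_next_def Gnorm_def)
  then have "g i = 0"
    using N_spd unfolding sym_pos_def_mat_def by (metis less_irrefl)
  with True show ?thesis by simp
next
  case False
  then show ?thesis by (simp add: craig_Suc(1))
qed

lemma craig_u: "u i = - (matrix_inv M *v (A *v p i))"
proof (induction i)
  case 0
  then show ?case by (simp add: craig_0 craig_v matrix_vector_mult_linear_simps)
next
  case (Suc i)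
  then show ?case
    by (simp add: craig_Suc(7,8) craig_v matrix_vector_mult_linear_simps)
qed

lemma r_in_span_q: "r i \<in> span (q ` {..i})"
proof (induction i)
  case 0
  then show ?case by (simp add: craig_0 span_base)
next
  case (Suc i)
  have "span (q ` {..i}) \<subseteq> span (q ` {..Suc i})"
    by (rule span_mono) auto
  with Suc.IH have "r i \<in> span (q ` {..Suc i})" by blast
  moreover have "q (Suc i) \<in> span (q ` {..Suc i})"
    by (rule span_base) simp
  ultimately show ?case
    unfolding craig_Suc(2) by (intro span_diff span_mul)
qed

lemma q_r_in_krylov: "q i \<in> K (Suc i) \<and> r i \<in> K (Suc i)"
proof (induction i)
  case 0
  have "matrix_inv N *v b \<in> K 1"
    using krylov_power_mem[of 0 1] by simp
  then show ?case
    unfolding craig_0(1,2) krylov_def by (simp add: span_mul)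
next
  case (Suc i)
  have "K (Suc i) \<subseteq> K (Suc (Suc i))"
    by (rule krylov_mono) simp
  with Suc.IH krylov_step
  have "L (r i) \<in> K (Suc (Suc i))" "q i \<in> K (Suc (Suc i))" "r i \<in> K (Suc (Suc i))"
    by auto
  then have "q (Suc i) \<in> K (Suc (Suc i))"
    unfolding craig_Suc(1) craig_g_eq krylov_def by (intro span_mul span_diff)
  with \<open>r i \<in> K (Suc (Suc i))\<close> show ?case
    unfolding craig_Suc(2) krylov_def by (intro conjI span_mul span_diff)
qed

lemma p_in_krylov: "p i \<in> K (Suc i)"
proof (induction i)
  case 0
  then show ?case
    using q_r_in_krylov[of 0] unfolding craig_0(8) krylov_def by (intro span_neg span_mul) simp
next
  case (Suc i)
  have "K (Suc i) \<subseteq> K (Suc (Suc i))"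
    by (rule krylov_mono) simp
  with Suc.IH q_r_in_krylov[of "Suc i"] show ?case
    unfolding craig_Suc(8) krylov_def by (intro span_diff span_mul) auto
qed

lemma b_inner_inv_N_pos: "0 < b \<bullet> (matrix_inv N *v b)"
  using sym_pos_def_mat_matrix_inv[OF N_spd] b_nonzero by (simp add: sym_pos_def_mat_def)

lemma beta1_pos: "0 < \<beta>\<^sub>1"
  using b_inner_inv_N_pos by (simp add: Gnorm_def)

lemma beta1_square: "\<beta>\<^sub>1 * \<beta>\<^sub>1 = b \<bullet> (matrix_inv N *v b)"
  using b_inner_inv_N_pos by (simp add: Gnorm_def)

lemma alpha_square: "\<alpha> i * \<alpha> i = r i \<bullet> (S *v r i)"
proof -
  have "0 \<le> r i \<bullet> (S *v r i)"
    using S_spd unfolding sym_pos_def_mat_def by (metis inner_zero_left order.refl less_imp_le)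
  then show ?thesis by (simp add: craig_alpha)
qed

lemma beta_square: "\<beta> i * \<beta> i = g i \<bullet> (N *v g i)"
proof -
  have "0 \<le> g i \<bullet> (N *v g i)"
    using N_spd unfolding sym_pos_def_mat_def by (metis inner_zero_left order.refl less_imp_le)
  then show ?thesis by (simp add: craig_beta_next_def Gnorm_def)
qed

lemma L_r_eq:
  assumes "\<alpha> j \<noteq> 0"
  shows "L (r j) = (\<alpha> j * \<beta> j) *\<^sub>R q (Suc j) + (\<alpha> j * \<alpha> j) *\<^sub>R q j"
proof -
  have "L (r j) = \<alpha> j *\<^sub>R ((1 / \<alpha> j) *\<^sub>R L (r j))"
    using assms by simp
  also have "(1 / \<alpha> j) *\<^sub>R L (r j) = \<beta> j *\<^sub>R q (Suc j) + \<alpha> j *\<^sub>R q j"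
    by (simp add: craig_g_eq flip: craig_g_beta)
  finally show ?thesis
    by (simp add: scaleR_add_right)
qed

lemma craig_residual:
  assumes "\<And>j. j \<le> i \<Longrightarrow> \<alpha> j \<noteq> 0"
  shows "matrix_inv N *v (- b - S *v p i) = \<zeta> i *\<^sub>R g i"
  using assms
proof (induction i)
  case 0
  have "matrix_inv N *v b = \<beta>\<^sub>1 *\<^sub>R q 0"
    using beta1_pos by (simp add: craig_0(1))
  then have "matrix_inv N *v (- b - S *v p 0) = - (\<beta>\<^sub>1 *\<^sub>R q 0) + (\<zeta> 0 / \<alpha> 0) *\<^sub>R L (r 0)"
    by (simp add: craig_0(8) matrix_vector_mult_linear_simps)
  also have "\<dots> = \<zeta> 0 *\<^sub>R g 0"
    using "0.prems"[of 0] by (simp add: craig_g_eq craig_0(2,6) algebra_simps)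
  finally show ?case .
next
  case (Suc i)
  have "matrix_inv N *v (- b - S *v p (Suc i))
      = matrix_inv N *v (- b - S *v p i) + (\<zeta> (Suc i) / \<alpha> (Suc i)) *\<^sub>R L (r (Suc i))"
    by (simp add: craig_Suc(8) matrix_vector_mult_linear_simps)
  also have "\<dots> = \<zeta> i *\<^sub>R g i + (\<zeta> (Suc i) / \<alpha> (Suc i)) *\<^sub>R L (r (Suc i))"
    using Suc by simp
  also have "\<dots> = \<zeta> (Suc i) *\<^sub>R g (Suc i)"
    using Suc.prems[of "Suc i"]
    by (simp add: craig_g_beta[of i] craig_g_eq[of "Suc i"] craig_Suc(6) algebra_simps)
  finally show ?case .
qed

lemma N_orthogonal_span_q:
  assumes "\<And>j. j \<le> i \<Longrightarrow> y \<bullet> (N *v q j) = 0" and "x \<in> span (q ` {..i})"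
  shows "y \<bullet> (N *v x) = 0"
proof -
  have "orthogonal (N *v y) x"
    using assms(2) by (rule orthogonal_to_span)
      (use assms(1) in \<open>auto simp: orthogonal_def N_inner_sym\<close>)
  then show ?thesis
    by (simp add: orthogonal_def N_inner_sym)
qed

lemma g_inner_N_q: "g i \<bullet> (N *v q j) = (1 / \<alpha> i) * (r i \<bullet> (S *v q j)) - \<alpha> i * (q i \<bullet> (N *v q j))"
  by (simp only: craig_g_eq inner_diff_left inner_scaleR_left L_self_adjoint)

lemma r_S_q:
  assumes conj: "\<forall>j<l. r j \<bullet> (S *v r l) = 0" and "j \<le> l"
  shows "r l \<bullet> (S *v q j) = (if j = l then \<alpha> l * \<alpha> l else 0)"
proof -
  have r_S_r: "r l \<bullet> (S *v r j) = (if j = l then \<alpha> l * \<alpha> l else 0)" if "j \<le> l" for j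
    using conj that alpha_square[of l] S_inner_commute[of "r l" "r j"] by auto
  show ?thesis
  proof (cases j)
    case 0
    then show ?thesis using r_S_r[of 0] by (simp add: craig_0(2)[symmetric])
  next
    case (Suc j')
    then show ?thesis
      using r_S_r[of j] r_S_r[of j'] \<open>j \<le> l\<close>
      by (simp add: q_Suc_eq matrix_vector_mult_linear_simps inner_linear_simps)
  qed
qed

lemma g_orthogonal_q:
  assumes "0 < \<alpha> l" and "\<forall>j<l. r j \<bullet> (S *v r l) = 0"
    and "\<forall>j\<le>l. q l \<bullet> (N *v q j) = (if j = l then 1 else 0)"
  shows "\<forall>j\<le>l. g l \<bullet> (N *v q j) = 0"
proof (intro allI impI)
  fix j
  assume "j \<le> l"
  then show "g l \<bullet> (N *v q j) = 0"
    using assms r_S_q[OF assms(2) \<open>j \<le> l\<close>] by (cases "j = l") (simp_all add: g_inner_N_q)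
qed

definition lanczos_orthogonal :: "nat \<Rightarrow> bool" where
  "lanczos_orthogonal i \<longleftrightarrow>
     (\<forall>j\<le>i. 0 < \<alpha> j)
   \<and> (\<forall>j\<le>i. \<forall>l\<le>i. q j \<bullet> (N *v q l) = (if j = l then 1 else 0))
   \<and> (\<forall>l\<le>i. \<forall>j<l. r j \<bullet> (S *v r l) = 0)
   \<and> (\<forall>j\<le>i. g i \<bullet> (N *v q j) = 0)"

lemma lanczos_orthogonal_0: "lanczos_orthogonal 0"
proof -
  have "q 0 \<noteq> 0"
    using beta1_pos b_nonzero N_cancel(1)[of b] by (auto simp: craig_0(1))
  then have "0 < \<alpha> 0"
    by (simp add: alpha_pos_iff craig_0(2))
  moreover have "q 0 \<bullet> (N *v q 0) = 1"
  proof -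
    show ?thesis
      using beta1_pos beta1_square b_inner_inv_N_pos
      by (simp add: craig_0(1) N_cancel matrix_vector_mult_linear_simps inner_commute field_simps)
  qed
  ultimately show ?thesis
    using g_orthogonal_q[of 0] unfolding lanczos_orthogonal_def by simp
qed

lemma q_orthonormal_Suc:
  assumes "lanczos_orthogonal i" and "\<beta> i \<noteq> 0"
  shows "\<forall>j\<le>Suc i. \<forall>l\<le>Suc i. q j \<bullet> (N *v q l) = (if j = l then 1 else 0)"
proof -
  have old: "\<forall>j\<le>i. \<forall>l\<le>i. q j \<bullet> (N *v q l) = (if j = l then 1 else 0)"
    and g_orth: "\<forall>j\<le>i. g i \<bullet> (N *v q j) = 0"
    using assms(1) by (simp_all add: lanczos_orthogonal_def)
  have "q (Suc i) \<bullet> (N *v q (Suc i)) = (g i \<bullet> (N *v g i)) / (\<beta> i * \<beta> i)"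
    by (simp add: craig_Suc(1) matrix_vector_mult_linear_simps)
  then have new_new: "q (Suc i) \<bullet> (N *v q (Suc i)) = 1"
    using assms(2) by (simp flip: beta_square)
  have new_old: "q (Suc i) \<bullet> (N *v q j) = 0" and old_new: "q j \<bullet> (N *v q (Suc i)) = 0"
    if "j \<le> i" for j
    using g_orth that N_inner_commute[of "q j" "q (Suc i)"]
    by (simp_all add: craig_Suc(1) inner_linear_simps)
  show ?thesis
    using old new_new new_old old_new by (auto simp: le_Suc_eq)
qed

lemma alpha_Suc_pos:
  assumes "lanczos_orthogonal i" and "\<beta> i \<noteq> 0"
  shows "0 < \<alpha> (Suc i)"
proof -
  note orth = q_orthonormal_Suc[OF assms]
  have "q (Suc i) \<bullet> (N *v r i) = 0"
    using orth by (intro N_orthogonal_span_q[OF _ r_in_span_q]) auto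
  then have "q (Suc i) \<bullet> (N *v r (Suc i)) = 1"
    using orth by (simp add: craig_Suc(2) matrix_vector_mult_linear_simps inner_linear_simps)
  then show ?thesis
    by (auto simp: alpha_pos_iff)
qed

lemma conjugate_Suc:
  assumes "lanczos_orthogonal i" and "\<beta> i \<noteq> 0"
  shows "\<forall>j<Suc i. r j \<bullet> (S *v r (Suc i)) = 0"
proof (intro allI impI)
  fix j
  assume "j < Suc i"
  then have "j \<le> i" by simp
  note orth = q_orthonormal_Suc[OF assms]
  have alpha_pos: "0 < \<alpha> j" "0 < \<alpha> i" and conj: "\<forall>l\<le>i. \<forall>j<l. r j \<bullet> (S *v r l) = 0"
    using assms(1) \<open>j \<le> i\<close> by (simp_all add: lanczos_orthogonal_def)
  have "r j \<bullet> (S *v r (Suc i)) = L (r j) \<bullet> (N *v q (Suc i)) - (\<beta> i / \<alpha> i) * (r j \<bullet> (S *v r i))"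
    by (simp add: L_self_adjoint craig_Suc(2) matrix_vector_mult_linear_simps inner_linear_simps)
  also have "L (r j) \<bullet> (N *v q (Suc i)) = (if j = i then \<alpha> i * \<beta> i else 0)"
    using orth \<open>j \<le> i\<close> alpha_pos(1)
    by (simp add: L_r_eq inner_linear_simps)
  also have "r j \<bullet> (S *v r i) = (if j = i then \<alpha> i * \<alpha> i else 0)"
    using conj \<open>j \<le> i\<close> alpha_square[of i] by auto
  finally show "r j \<bullet> (S *v r (Suc i)) = 0"
    using alpha_pos(2) by (cases "j = i") simp_all
qed

lemma lanczos_orthogonal_Suc:
  assumes "lanczos_orthogonal i" and "\<beta> i \<noteq> 0"
  shows "lanczos_orthogonal (Suc i)"
proof -
  note alpha_pos = alpha_Suc_pos[OF assms] and orth = q_orthonormal_Suc[OF assms]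
    and conj = conjugate_Suc[OF assms]
  have "\<forall>j\<le>Suc i. g (Suc i) \<bullet> (N *v q j) = 0"
    using alpha_pos conj orth by (intro g_orthogonal_q) auto
  with assms(1) alpha_pos orth conj show ?thesis
    unfolding lanczos_orthogonal_def by (auto simp: le_Suc_eq)
qed

lemma lanczos_orthogonal:
  "(\<And>j. j < i \<Longrightarrow> \<beta> j \<noteq> 0) \<Longrightarrow> lanczos_orthogonal i"
  by (induction i) (simp_all add: lanczos_orthogonal_0 lanczos_orthogonal_Suc)

lemma L_r_in_span_q: "\<alpha> j \<noteq> 0 \<Longrightarrow> L (r j) \<in> span (q ` {..Suc j})"
  unfolding L_r_eq by (intro span_add span_mul span_base) auto

lemma L_q_in_span_q:
  assumes "\<And>j. j \<le> l \<Longrightarrow> \<alpha> j \<noteq> 0"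
  shows "L (q l) \<in> span (q ` {..Suc l})"
proof (cases l)
  case 0
  then show ?thesis
    using assms L_r_in_span_q[of 0] by (simp add: craig_0(2)[symmetric])
next
  case (Suc j)
  have "span (q ` {..Suc j}) \<subseteq> span (q ` {..Suc l})"
    using Suc by (intro span_mono) auto
  with Suc assms L_r_in_span_q[of j] L_r_in_span_q[of l]
  have "L (r l) \<in> span (q ` {..Suc l})" "L (r j) \<in> span (q ` {..Suc l})"
    by auto
  then show ?thesis
    using Suc by (simp add: q_Suc_eq matrix_vector_mult_linear_simps span_add span_mul)
qed

lemma L_power_in_span_q:
  assumes "\<And>j. j < l \<Longrightarrow> \<alpha> j \<noteq> 0"
  shows "(L ^^ l) (matrix_inv N *v b) \<in> span (q ` {..l})"
  using assms
proof (induction l)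
  case 0
  have "matrix_inv N *v b = \<beta>\<^sub>1 *\<^sub>R q 0"
    using beta1_pos by (simp add: craig_0(1))
  then show ?case
    by (simp add: span_mul span_base)
next
  case (Suc l)
  have "L ` span (q ` {..l}) = span (L ` q ` {..l})"
    using linear_L by (simp add: span_linear_image)
  also have "\<dots> \<subseteq> span (q ` {..Suc l})"
  proof -
    have "L (q m) \<in> span (q ` {..Suc l})" if "m \<le> l" for m
    proof -
      have "L (q m) \<in> span (q ` {..Suc m})"
        using Suc.prems that by (intro L_q_in_span_q) auto
      moreover have "span (q ` {..Suc m}) \<subseteq> span (q ` {..Suc l})"
        using that by (intro span_mono) auto
      ultimately show ?thesis by blast
    qed
    then show ?thesis
      by (intro span_minimal) auto
  qed
  finally show ?case
    using Suc by auto
qed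

lemma krylov_subset_span_q:
  assumes "\<And>j. j < i \<Longrightarrow> \<alpha> j \<noteq> 0"
  shows "K (Suc i) \<subseteq> span (q ` {..i})"
proof (rule krylov_subset_subspace[OF subspace_span])
  fix l
  assume "l < Suc i"
  then have "span (q ` {..l}) \<subseteq> span (q ` {..i})"
    by (intro span_mono) auto
  with \<open>l < Suc i\<close> assms L_power_in_span_q[of l]
  show "(L ^^ l) (matrix_inv N *v b) \<in> span (q ` {..i})"
    by auto
qed

lemma residual_orthogonal_krylov:
  assumes "\<And>j. j < i \<Longrightarrow> \<beta> j \<noteq> 0" and "x \<in> K (Suc i)"
  shows "(- b - S *v p i) \<bullet> x = 0"
proof -
  have alpha_pos: "\<And>j. j \<le> i \<Longrightarrow> 0 < \<alpha> j" and g_orth: "\<And>j. j \<le> i \<Longrightarrow> g i \<bullet> (N *v q j) = 0"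
    using lanczos_orthogonal[OF assms(1)] by (simp_all add: lanczos_orthogonal_def)
  have "- b - S *v p i = N *v (matrix_inv N *v (- b - S *v p i))"
    by (simp add: N_cancel)
  also have "matrix_inv N *v (- b - S *v p i) = \<zeta> i *\<^sub>R g i"
    by (rule craig_residual) (use alpha_pos in force)
  finally have residual: "- b - S *v p i = \<zeta> i *\<^sub>R (N *v g i)"
    by (simp add: matrix_vector_mult_scaleR)
  have "K (Suc i) \<subseteq> span (q ` {..i})"
    using alpha_pos by (intro krylov_subset_span_q) (metis less_imp_le order_less_irrefl)
  with assms(2) have "x \<in> span (q ` {..i})" by blast
  then have "g i \<bullet> (N *v x) = 0"
    using g_orth by (rule N_orthogonal_span_q[rotated])
  then show ?thesis
    by (simp add: residual N_inner_sym)
qed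

end

theorem theorem3p1:
  fixes M :: "real^'m^'m" and A :: "real^'n^'m" and C :: "real^'n^'n"
    and N :: "real^'n^'n" and b :: "real^'n" and k :: nat
  assumes "sym_pos_def_mat M"
    and "CARD('n) \<le> CARD('m)"
    and "rank A = CARD('n)"
    and "sym_pos_semidef_mat C"
    and "b \<noteq> 0"
    and "sym_pos_def_mat N"
    and "craig_defined M A C N b k"
  shows "craig_p M A C N b k \<in> krylov (schur M A C) N b k
    \<and> (\<forall>x \<in> krylov (schur M A C) N b k.
          (- b - schur M A C *v craig_p M A C N b k) \<bullet> x = 0)
    \<and> (\<forall>p \<in> krylov (schur M A C) N b k.
          (\<forall>x \<in> krylov (schur M A C) N b k. (- b - schur M A C *v p) \<bullet> x = 0)
          \<longrightarrow> p = craig_p M A C N b k)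
    \<and> craig_u M A C N b k = - (matrix_inv M *v (A *v craig_p M A C N b k))"
proof -
  have "inj ((*v) A)"
    using assms(3) full_rank_injective by blast
  interpret craig_setting M A C N b
    by (rule craig_setting.intro) fact+
  define i where "i = k - 1"
  have k: "k = Suc i" and beta: "\<And>j. j < i \<Longrightarrow> \<beta> j \<noteq> 0"
    using assms(7) by (simp_all add: craig_defined_def i_def less_diff_conv)
  have p_in: "p i \<in> K k" and residual_orth: "\<forall>x\<in>K k. (- b - S *v p i) \<bullet> x = 0"
    using p_in_krylov residual_orthogonal_krylov[OF beta] by (simp_all add: k)
  have S_pos: "\<And>x. x \<noteq> 0 \<Longrightarrow> 0 < x \<bullet> (S *v x)"
    using S_spd by (simp add: sym_pos_def_mat_def)
  have "subspace (K k)"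
    by (simp add: krylov_def)
  then have unique: "\<forall>p'\<in>K k. (\<forall>x\<in>K k. (- b - S *v p') \<bullet> x = 0) \<longrightarrow> p' = p i"
    using galerkin_solution_unique[OF S_pos _ _ p_in _ residual_orth] by auto
  have "craig_p M A C N b k = p i" "craig_u M A C N b k = u i"
    by (simp_all add: craig_p_def craig_u_def k)
  then show ?thesis
    by (simp only:) (intro conjI p_in residual_orth unique craig_u)
qed

end
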